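(* Let $f$ be a spectral density on $\Lambda$. If the prediction error tends to zero exponentially, i.e. there exists $q\in(0,1)$ with $\sigma_n(f)=O(q^n)$ as $n\to\infty$ (equivalently $\limsup_{n\to\infty}\sqrt[n]{\sigma_n(f)}<1$), then $f$ vanishes on a subset of $\Lambda$ of positive Lebesgue measure.
   Context: $\Lambda=[-\pi,\pi]$. A spectral density is $f\ge0$, $f\in L^1(\Lambda)$, positive on a set of positive measure. $\sigma_n^2(f)=\min_{c_1,\dots,c_n\in\mathbb C}\int_\Lambda|1-\sum_{k=1}^n c_ke^{-ik\lambda}|^2f(\lambda)\,d\lambda$, $\sigma_n(f)=\sqrt{\sigma_n^2(f)}$. *)

theory Defs
  imports "HOL-Analysis.Analysis" "HOL-Library.Landau_Symbols"
begin

definition Lam :: "real set" where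
  "Lam = {-pi..pi}"

definition spectral_density :: "(real \<Rightarrow> real) \<Rightarrow> bool" where
  "spectral_density f \<longleftrightarrow>
     (\<forall>x\<in>Lam. 0 \<le> f x) \<and>
     set_integrable lebesgue Lam f \<and>
     {x\<in>Lam. 0 < f x} \<in> sets lebesgue \<and>
     emeasure lebesgue {x\<in>Lam. 0 < f x} > 0"

definition sigma2 :: "(real \<Rightarrow> real) \<Rightarrow> nat \<Rightarrow> real" where
  "sigma2 f n = (INF c \<in> (UNIV :: (nat \<Rightarrow> complex) set).
     (LINT l:Lam|lebesgue.
        (cmod (1 - (\<Sum>k=1..n. c k * cis (- real k * l))))\<^sup>2 * f l))"

definition sigma :: "(real \<Rightarrow> real) \<Rightarrow> nat \<Rightarrow> real" where
  "sigma f n = sqrt (sigma2 f n)"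

end

theory Submission
  imports Defs "HOL-Complex_Analysis.Complex_Analysis"
    "HOL-Computational_Algebra.Fundamental_Theorem_Algebra"
begin

text \<open>
  Write a polynomial \<open>Q\<close> with \<open>Q(0) = 1\<close>, \<open>deg Q \<le> n\<close> and no zeros on the unit circle as
  \<open>\<Prod>\<^sub>i (1 - v\<^sub>i z)\<close>. By Jensen's formula \<open>S(t) = ln |Q(e\<^sup>-\<^sup>i\<^sup>t)| - \<Sum>\<^sub>i ln\<^sup>+ |v\<^sub>i|\<close> has mean zero on
  \<open>[-\<pi>, \<pi>]\<close>, and \<open>S \<le> n ln 2\<close> because \<open>|1 - v\<^sub>i e\<^sup>-\<^sup>i\<^sup>t| \<le> 2 max 1 |v\<^sub>i|\<close>. Averaging, the set where
  \<open>|Q(e\<^sup>-\<^sup>i\<^sup>t)| < b\<^sup>n\<close> (\<open>0 < b < 1\<close>) has measure at most \<open>\<mu> = 2\<pi> ln 2 / (ln 2 - ln b) < 2\<pi>\<close>, uniformly in \<open>n\<close>.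

  If \<open>\<sigma>\<^sub>n(f) = O(q\<^sup>n)\<close>, pick \<open>q < b < 1\<close> and almost optimal predictors \<open>Q\<^sub>n\<close>, slightly dilated so that
  they have no zeros on the circle. By Chebyshev's inequality \<open>{f \<ge> \<epsilon>} \<inter> {|Q\<^sub>n| \<ge> b\<^sup>n}\<close> has measure
  \<open>O((q/b)\<^sup>2\<^sup>n/\<epsilon>)\<close>, so \<open>|{f \<ge> \<epsilon>}| \<le> \<mu>\<close> for every \<open>\<epsilon> > 0\<close>. Hence \<open>|{f > 0}| \<le> \<mu>\<close>, and \<open>f\<close> vanishes
  on a set of measure at least \<open>2\<pi> - \<mu>\<close>.
\<close>

lemma has_integral_ln_norm_1_plus_cis:
  fixes u :: complex assumes u: "cmod u < 1"
  shows "((\<lambda>t. ln (cmod (1 + u * cis t))) has_integral 0) {0..2*pi}"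
proof -
  define g where "g = (\<lambda>z. Ln (1 + u * z))"
  have nz: "1 + u * z \<notin> \<real>\<^sub>\<le>\<^sub>0" if "cmod z \<le> 1" for z
  proof -
    have "cmod (u*z) < 1" using u that by (simp add: norm_mult) (smt (verit) mult_left_le norm_ge_zero)
    hence "Re (u*z) > -1" using abs_Re_le_cmod[of "u*z"] by linarith
    thus ?thesis by (auto simp: complex_nonpos_Reals_iff)
  qed
  have hol: "g holomorphic_on cball 0 1" unfolding g_def
    by (intro holomorphic_intros) (use nz in auto)
  have "((\<lambda>z. g z / (z - 0)) has_contour_integral (2 * of_real pi * \<i> * g 0)) (circlepath 0 1)"
    by (rule Cauchy_integral_circlepath_simple[OF hol]) simp
  hence "((\<lambda>z. g z / z) has_contour_integral 0) (part_circlepath 0 1 0 (2*pi))"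
    by (simp add: g_def circlepath_def)
  hence "((\<lambda>t. g (0 + 1 * cis t) / (0 + 1 * cis t) * 1 * \<i> * cis t) has_integral 0) {0..2*pi}"
    by (subst (asm) has_contour_integral_part_circlepath_iff) auto
  hence "((\<lambda>t. \<i> * g (cis t)) has_integral 0) {0..2*pi}"
    by (rule has_integral_eq[rotated]) (simp add: cis_neq_zero)
  hence "((\<lambda>t. Im (\<i> * g (cis t))) has_integral Im 0) {0..2*pi}"
    using has_integral_linear[OF _ bounded_linear_Im] unfolding o_def by blast
  moreover have "Im (\<i> * g (cis t)) = ln (cmod (1 + u * cis t))" for t
  proof -
    have "1 + u * cis t \<noteq> 0" using nz[of "cis t"] by auto
    thus ?thesis by (simp add: g_def)
  qed
  ultimately show ?thesis by simp
qed

lemma has_integral_ln_norm_1_minus_cis: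
  fixes u :: complex assumes u: "cmod u < 1"
  shows "((\<lambda>t. ln (cmod (1 - u * cis (-t)))) has_integral 0) {-pi..pi}"
proof -
  have "((\<lambda>t. ln (cmod (1 + cnj u * cis (t + pi)))) has_integral 0) {0-pi..2*pi-pi}"
    by (rule has_integral_shift_real_ivl[OF has_integral_ln_norm_1_plus_cis]) (use u in simp)
  moreover have "cmod (1 + cnj u * cis (t + pi)) = cmod (1 - u * cis (-t))" for t
  proof -
    have "1 + cnj u * cis (t + pi) = cnj (1 - u * cis (-t))"
      by (simp add: cis.ctr complex_eq_iff)
    thus ?thesis by (simp only: complex_mod_cnj)
  qed
  ultimately show ?thesis by simp
qed

lemma has_integral_ln_norm_linear_factor:
  fixes v :: complex assumes v: "cmod v \<noteq> 1"
  shows "((\<lambda>t. ln (cmod (1 - v * cis (-t))) - ln (max 1 (cmod v))) has_integral 0) {-pi..pi}"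
proof (cases "cmod v < 1")
  case True
  thus ?thesis using has_integral_ln_norm_1_minus_cis[OF True] by simp
next
  case False
  hence v1: "cmod v > 1" using v by simp
  hence v0: "v \<noteq> 0" by auto
  have u: "cmod (cnj (1/v)) < 1" using v1 by (auto simp: norm_divide divide_simps)
  have "ln (cmod (1 - v * cis (-t))) - ln (max 1 (cmod v)) = ln (cmod (1 - cnj (1/v) * cis (-t)))"
    for t
  proof -
    have "cmod (cnj (1/v) * cis (-t)) < 1" using u by (simp only: norm_mult norm_cis mult_1_right)
    hence nz: "1 - cnj (1/v) * cis (-t) \<noteq> 0" by auto
    have "1 - v * cis (-t) = (- v * cis (-t)) * cnj (1 - cnj (1/v) * cis (-t))"
      using v0 by (simp add: algebra_simps cis_mult cis_cnj)
    hence "cmod (1 - v * cis (-t)) = cmod v * cmod (1 - cnj (1/v) * cis (-t))"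
      by (simp only: norm_mult norm_minus_cancel norm_cis complex_mod_cnj mult_1_right)
    thus ?thesis using v0 v1 nz by (simp add: ln_mult)
  qed
  thus ?thesis using has_integral_ln_norm_1_minus_cis[OF u] by simp
qed

lemma ln_norm_linear_factor_le:
  fixes v :: complex
  shows "ln (cmod (1 - v * cis (-t))) - ln (max 1 (cmod v)) \<le> ln 2"
proof (cases "1 - v * cis (-t) = 0")
  case True
  have "0 \<le> ln (max 1 (cmod v))" by (rule ln_ge_zero) simp
  moreover have "0 \<le> (ln 2::real)" by simp
  moreover have "ln (cmod (1 - v * cis (-t))) = 0" using True by simp
  ultimately show ?thesis by linarith
next
  case False
  have "cmod (1 - v * cis (-t)) \<le> 1 + cmod v"
    using norm_triangle_ineq4[of 1 "v * cis (-t)"] by (simp add: norm_mult)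
  also have "\<dots> \<le> 2 * max 1 (cmod v)" by simp
  finally have "ln (cmod (1 - v * cis (-t))) \<le> ln (2 * max 1 (cmod v))"
    using False by simp
  also have "\<dots> = ln 2 + ln (max 1 (cmod v))" by (simp add: ln_mult)
  finally show ?thesis by simp
qed

lemma poly_eq_prod_one_minus:
  fixes Q :: "complex poly" assumes Q0: "poly Q 0 = 1"
  obtains v where "\<And>z. poly Q z = (\<Prod>i<degree Q. 1 - v i * z)"
proof -
  obtain root where R: "smult (lead_coeff Q) (\<Prod>i<degree Q. [:-root i, 1:]) = Q"
    using complex_poly_decompose' by blast
  define d where "d = degree Q"
  define lc where "lc = lead_coeff Q"
  have Qz: "poly Q z = lc * (\<Prod>i<d. z - root i)" for z
    by (subst R[symmetric]) (simp add: poly_prod lc_def d_def)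
  have P0: "lc * (\<Prod>i<d. - root i) = 1" using Qz[of 0] Q0 by simp
  have root_nz: "root i \<noteq> 0" if "i < d" for i
  proof
    assume "root i = 0"
    hence "(\<Prod>i<d. - root i) = 0" using that by (auto intro: prod_zero)
    with P0 show False by simp
  qed
  have "poly Q z = (\<Prod>i<d. 1 - z / root i)" for z
  proof -
    have "poly Q z = lc * (\<Prod>i<d. (- root i) * (1 - z / root i))"
      unfolding Qz
      by (intro arg_cong[where f="\<lambda>x. lc * x"] prod.cong refl) (simp add: root_nz field_simps)
    also have "\<dots> = (lc * (\<Prod>i<d. - root i)) * (\<Prod>i<d. 1 - z / root i)"
      by (simp only: prod.distrib mult.assoc)
    finally show ?thesis using P0 by simp
  qed
  thus ?thesis using that[of "\<lambda>i. 1 / root i"] by (simp add: d_def)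
qed

lemma ln_norm_poly_circle_minorant:
  fixes Q :: "complex poly"
  assumes Q0: "poly Q 0 = 1" and deg: "degree Q \<le> n"
    and no_root: "\<And>z. cmod z = 1 \<Longrightarrow> poly Q z \<noteq> 0"
  obtains S where "(S has_integral 0) {-pi..pi}" and "\<And>t. S t \<le> real n * ln 2"
    and "\<And>t. S t \<le> ln (cmod (poly Q (cis (-t))))"
proof -
  obtain v where vQ: "\<And>z. poly Q z = (\<Prod>i<degree Q. 1 - v i * z)"
    using poly_eq_prod_one_minus[OF Q0] by blast
  define d where "d = degree Q"
  have "cmod (v i) \<noteq> 1" if "i < d" for i
  proof
    assume v1: "cmod (v i) = 1"
    hence "poly Q (1 / v i) = 0" using that by (auto simp: vQ d_def prod_zero_iff)
    with v1 no_root show False by (simp add: norm_divide)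
  qed
  hence factor_int: "((\<lambda>t. ln (cmod (1 - v i * cis (-t))) - ln (max 1 (cmod (v i))))
      has_integral 0) {-pi..pi}" if "i < d" for i
    using that has_integral_ln_norm_linear_factor by blast
  define S where "S t = (\<Sum>i<d. ln (cmod (1 - v i * cis (-t))) - ln (max 1 (cmod (v i))))" for t
  have "(S has_integral 0) {-pi..pi}"
    using has_integral_sum[of "{..<d}", OF _ factor_int] by (simp add: S_def[abs_def])
  moreover have "S t \<le> real n * ln 2" for t
  proof -
    have "S t \<le> of_nat (card {..<d}) * ln 2"
      unfolding S_def by (rule sum_bounded_above) (rule ln_norm_linear_factor_le)
    also have "\<dots> \<le> real n * ln 2" using deg d_def by (simp add: mult_right_mono)
    finally show ?thesis .
  qed
  moreover have "S t \<le> ln (cmod (poly Q (cis (-t))))" for t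
  proof -
    have "1 - v i * cis (-t) \<noteq> 0" if "i < d" for i
      using no_root[of "cis (-t)"] that by (auto simp: vQ d_def prod_zero_iff)
    hence "ln (\<Prod>i<d. cmod (1 - v i * cis (-t))) = (\<Sum>i<d. ln (cmod (1 - v i * cis (-t))))"
      by (intro ln_prod) auto
    hence "ln (cmod (poly Q (cis (-t)))) = (\<Sum>i<d. ln (cmod (1 - v i * cis (-t))))"
      by (simp add: vQ d_def prod_norm)
    moreover have "0 \<le> (\<Sum>i<d. ln (max 1 (cmod (v i))))"
      by (intro sum_nonneg ln_ge_zero) simp
    ultimately show ?thesis by (simp add: S_def sum_subtractf)
  qed
  ultimately show ?thesis using that by blast
qed

lemma measure_le_of_has_integral_zero:
  fixes S :: "real \<Rightarrow> real"
  assumes S: "(S has_integral 0) {a..b}" and "a \<le> b"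
    and S_le: "\<And>t. t \<in> {a..b} \<Longrightarrow> S t \<le> M"
    and E: "E \<in> lmeasurable" "E \<subseteq> {a..b}" and S_le_E: "\<And>t. t \<in> E \<Longrightarrow> S t \<le> M - D"
    and D: "0 < D"
  shows "measure lebesgue E \<le> (b - a) * M / D"
proof -
  have "(indicat_real E has_integral measure lebesgue E) UNIV"
    using E lmeasurable_iff_indicator_has_integral by blast
  moreover have "(\<lambda>x. if x \<in> {a..b} then indicat_real E x else 0) = indicator E"
    using E(2) by (auto simp: indicator_def fun_eq_iff)
  ultimately have "(indicat_real E has_integral measure lebesgue E) {a..b}"
    using has_integral_restrict_UNIV[of "{a..b}" "indicat_real E"] by simp
  from has_integral_diff[OF has_integral_const_real[of M a b] has_integral_mult_right[OF this, of D]]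
  have "((\<lambda>t. M - D * indicator E t) has_integral (b - a) * M - D * measure lebesgue E) {a..b}"
    using \<open>a \<le> b\<close> by (simp add: mult.commute)
  moreover have "S t \<le> M - D * indicator E t" if "t \<in> {a..b}" for t
    using S_le[OF that] S_le_E by (cases "t \<in> E") auto
  ultimately have "0 \<le> (b - a) * M - D * measure lebesgue E"
    using has_integral_le[OF S] by blast
  thus ?thesis using D by (simp add: pos_le_divide_eq mult.commute)
qed

lemma continuous_imp_borel_measurable_lebesgue:
  fixes g :: "real \<Rightarrow> real"
  shows "continuous_on UNIV g \<Longrightarrow> g \<in> borel_measurable lebesgue"
  using continuous_imp_measurable_on_sets_lebesgue[of UNIV g] by (simp add: lebesgue_on_UNIV_eq)

lemma lmeasurable_subset_Lam: "S \<subseteq> Lam \<Longrightarrow> S \<in> sets lebesgue \<Longrightarrow> S \<in> lmeasurable"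
  by (rule bounded_set_imp_lmeasurable) (auto simp: Lam_def intro: bounded_subset[of "{-pi..pi}"])

lemma measure_poly_circle_small_le:
  fixes Q :: "complex poly"
  assumes Q0: "poly Q 0 = 1" and deg: "degree Q \<le> n" and n: "1 \<le> n"
    and no_root: "\<And>z. cmod z = 1 \<Longrightarrow> poly Q z \<noteq> 0" and b: "0 < b" "b < 1"
  shows "{t\<in>Lam. cmod (poly Q (cis (-t))) < b^n} \<in> lmeasurable"
    and "measure lebesgue {t\<in>Lam. cmod (poly Q (cis (-t))) < b^n} \<le> 2*pi*ln 2 / (ln 2 - ln b)"
proof -
  obtain S where S: "(S has_integral 0) {-pi..pi}" and S_le: "\<And>t. S t \<le> real n * ln 2"
    and S_le_ln: "\<And>t. S t \<le> ln (cmod (poly Q (cis (-t))))"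
    using ln_norm_poly_circle_minorant[OF Q0 deg no_root] by blast
  define E where "E = {t\<in>Lam. cmod (poly Q (cis (-t))) < b^n}"
  have "(\<lambda>t. cmod (poly Q (cis (-t)))) \<in> borel_measurable lebesgue"
    by (intro continuous_imp_borel_measurable_lebesgue continuous_intros)
  hence "(\<lambda>t. cmod (poly Q (cis (-t)))) -` {..<b^n} \<inter> space lebesgue \<in> sets lebesgue"
    by (rule measurable_sets) simp
  moreover have "E = Lam \<inter> ((\<lambda>t. cmod (poly Q (cis (-t)))) -` {..<b^n} \<inter> space lebesgue)"
    by (auto simp: E_def)
  ultimately have "E \<in> sets lebesgue" by (simp add: Lam_def sets.Int)
  thus E: "E \<in> lmeasurable" by (intro lmeasurable_subset_Lam) (auto simp: E_def)
  have "S t \<le> real n * ln 2 - real n * (ln 2 - ln b)" if "t \<in> E" for t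
  proof -
    have "ln (cmod (poly Q (cis (-t)))) < ln (b^n)"
      using that no_root[of "cis (-t)"] b by (simp add: E_def)
    thus ?thesis using S_le_ln[of t] b by (simp add: ln_realpow algebra_simps)
  qed
  moreover have "0 < real n * (ln 2 - ln b)" using n b by (simp add: ln_less_zero add_pos_pos)
  ultimately have "measure lebesgue E \<le> (pi - - pi) * (real n * ln 2) / (real n * (ln 2 - ln b))"
    by (intro measure_le_of_has_integral_zero[OF S _ S_le E]) (auto simp: E_def Lam_def)
  thus "measure lebesgue E \<le> 2*pi*ln 2 / (ln 2 - ln b)" using n by simp
qed

lemma norm_power_sub_dilated_power_le:
  fixes w :: complex assumes w: "cmod w = 1" and r: "0 \<le> r" "r \<le> 1"
  shows "cmod (w ^ k - (of_real r * w) ^ k) \<le> real k * (1 - r)"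
proof -
  have "w ^ k - (of_real r * w) ^ k = w ^ k * complex_of_real (1 - r ^ k)"
    by (simp add: power_mult_distrib algebra_simps)
  hence "cmod (w ^ k - (of_real r * w) ^ k) = cmod (complex_of_real (1 - r ^ k))"
    using w by (simp only: norm_mult norm_power mult_1_left power_one)
  also have "\<dots> = 1 - r ^ k" using r by (simp only: norm_of_real abs_of_nonneg power_le_one diff_ge_0_iff_ge)
  also have "\<dots> \<le> real k * (1 - r)"
    using Bernoulli_inequality[of "r - 1" k] r by (simp add: algebra_simps)
  finally show ?thesis .
qed

lemma norm_sum_dilated_power_sub_le:
  fixes c :: "nat \<Rightarrow> complex" and w :: complex
  assumes w: "cmod w = 1" and r: "0 \<le> r" "r \<le> 1"
  shows "cmod (\<Sum>k=1..n. c k * (w ^ k - (of_real r * w) ^ k)) \<le> real n * (\<Sum>k=1..n. cmod (c k)) * (1 - r)"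
proof -
  have "cmod (\<Sum>k=1..n. c k * (w ^ k - (of_real r * w) ^ k)) \<le> (\<Sum>k=1..n. cmod (c k) * (real n * (1 - r)))"
    (is "_ \<le> ?bound")
  proof (rule order.trans[OF norm_sum sum_mono])
    fix k assume k: "k \<in> {1..n}"
    have "cmod (w ^ k - (of_real r * w) ^ k) \<le> real k * (1 - r)"
      using w r by (rule norm_power_sub_dilated_power_le)
    also have "\<dots> \<le> real n * (1 - r)" using k r by (intro mult_right_mono) auto
    finally show "cmod (c k * (w ^ k - (of_real r * w) ^ k)) \<le> cmod (c k) * (real n * (1 - r))"
      by (simp add: norm_mult mult_left_mono)
  qed
  also have "?bound = real n * (\<Sum>k=1..n. cmod (c k)) * (1 - r)"
    unfolding sum_distrib_right[symmetric] by (simp add: algebra_simps)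
  finally show ?thesis .
qed

text \<open>Dilating \<open>P(z) = 1 - \<Sum>\<^sub>k c\<^sub>k z\<^sup>k\<close> to \<open>P(rz)\<close> with \<open>r\<close> close to 1 and \<open>r\<close> not the modulus of a zero
  of \<open>P\<close> removes all zeros from the unit circle.\<close>

lemma trig_poly_approx_no_circle_root:
  fixes c :: "nat \<Rightarrow> complex" and n :: nat and \<delta> :: real
  assumes n: "1 \<le> n" and \<delta>: "0 < \<delta>"
  obtains Q where "poly Q 0 = 1" "degree Q \<le> n" "\<And>z. cmod z = 1 \<Longrightarrow> poly Q z \<noteq> 0"
    "\<And>t. cmod (poly Q (cis (-t)) - (1 - (\<Sum>k=1..n. c k * cis (- real k * t)))) \<le> \<delta>"
proof -
  define P where "P = 1 - (\<Sum>k=1..n. monom (c k) k)"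
  have Pz: "poly P z = 1 - (\<Sum>k=1..n. c k * z ^ k)" for z
    by (simp add: P_def poly_sum poly_monom)
  have P0: "poly P 0 = 1" by (simp add: Pz)
  have degP: "degree P \<le> n"
    unfolding P_def
    by (rule order.trans[OF degree_diff_le_max])
       (auto intro!: degree_sum_le order.trans[OF degree_monom_le])
  have finite_bad: "finite (cmod ` {x. poly P x = 0})"
    by (intro finite_imageI poly_roots_finite) (use P0 in auto)
  define M where "M = (\<Sum>k=1..n. cmod (c k))"
  have M0: "0 \<le> M" unfolding M_def by (simp add: sum_nonneg)
  define r0 where "r0 = max 0 (1 - \<delta> / (n * (M + 1)))"
  have "r0 < 1" using \<delta> n M0 by (simp add: r0_def)
  hence "infinite ({r0<..<1} - cmod ` {x. poly P x = 0})"
    using finite_bad by (simp add: Diff_infinite_finite)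
  then obtain r where "r \<in> {r0<..<1}" and r_good: "r \<notin> cmod ` {x. poly P x = 0}"
    by (metis Diff_iff ex_in_conv finite.emptyI)
  hence r0r: "r0 < r" and r1: "r < 1" by auto
  have r: "0 < r" using r0r by (simp add: r0_def)
  have rd: "real n * M * (1 - r) \<le> \<delta>"
  proof -
    have "1 - r < \<delta> / (n * (M + 1))" using r0r by (simp add: r0_def)
    moreover have "0 < real n * (M + 1)" using n M0 by auto
    ultimately have "real n * (M + 1) * (1 - r) < \<delta>" by (simp add: pos_less_divide_eq mult.commute)
    moreover have "real n * M * (1 - r) \<le> real n * (M + 1) * (1 - r)"
      using r1 by (intro mult_right_mono mult_left_mono) auto
    ultimately show ?thesis by linarith
  qed
  define Q where "Q = pcompose P [:0, complex_of_real r:]"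
  have Qz: "poly Q z = poly P (of_real r * z)" for z by (simp add: Q_def poly_pcompose mult.commute)
  have "poly Q 0 = 1" using P0 by (simp add: Qz)
  moreover have "degree Q \<le> n"
    using degree_pcompose_le[of P "[:0, complex_of_real r:]"] degP r by (simp add: Q_def)
  moreover have "poly Q z \<noteq> 0" if "cmod z = 1" for z
  proof
    assume "poly Q z = 0"
    hence "cmod (of_real r * z) \<in> cmod ` {x. poly P x = 0}" by (simp add: Qz)
    thus False using r_good that r by (simp add: norm_mult)
  qed
  moreover have "cmod (poly Q (cis (-t)) - (1 - (\<Sum>k=1..n. c k * cis (- real k * t)))) \<le> \<delta>" for t
  proof -
    have "cis (- real k * t) = cis (-t) ^ k" for k by (simp add: Complex.DeMoivre)
    hence "poly Q (cis (-t)) - (1 - (\<Sum>k=1..n. c k * cis (- real k * t)))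
        = (\<Sum>k=1..n. c k * (cis (-t) ^ k - (of_real r * cis (-t)) ^ k))"
      by (simp add: Qz Pz sum_subtractf[symmetric] algebra_simps)
    also have "cmod \<dots> \<le> real n * M * (1 - r)"
      unfolding M_def using r r1 by (intro norm_sum_dilated_power_sub_le) auto
    finally show ?thesis using rd by linarith
  qed
  ultimately show ?thesis using that by blast
qed

lemma set_integrable_bounded_mult:
  fixes g f :: "'a \<Rightarrow> real"
  assumes f: "set_integrable M A f" and g: "g \<in> borel_measurable M" and g_le: "\<And>x. \<bar>g x\<bar> \<le> B"
  shows "set_integrable M A (\<lambda>x. g x * f x)"
proof -
  have f': "integrable M (\<lambda>x. indicator A x *\<^sub>R f x)"
    using f by (simp add: set_integrable_def)
  have "(\<lambda>x. g x * (indicator A x *\<^sub>R f x)) \<in> borel_measurable M"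
    using g borel_measurable_integrable[OF f'] by (rule borel_measurable_times)
  moreover have "(\<lambda>x. g x * (indicator A x *\<^sub>R f x)) = (\<lambda>x. indicator A x *\<^sub>R (g x * f x))"
    by (auto simp: indicator_def)
  moreover have "norm (indicator A x *\<^sub>R (g x * f x)) \<le> norm (B * (indicator A x *\<^sub>R f x))" for x
    using mult_right_mono[of "\<bar>g x\<bar>" "\<bar>B\<bar>" "\<bar>f x\<bar>"] g_le[of x]
    by (auto simp: indicator_def abs_mult)
  ultimately show ?thesis
    unfolding set_integrable_def
    by (intro Bochner_Integration.integrable_bound[OF integrable_mult_right[OF f']]) auto
qed

lemma set_integrable_preimage_sets:
  assumes "set_integrable M A f" "A \<in> sets M" "T \<in> sets borel"
  shows "{x\<in>A. f x \<in> T} \<in> sets M"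
proof -
  have "f -` T \<inter> A \<in> sets M"
    using assms by (intro set_borel_measurable_sets)
      (auto simp: set_borel_measurable_def set_integrable_def)
  moreover have "{x\<in>A. f x \<in> T} = f -` T \<inter> A" by auto
  ultimately show ?thesis by simp
qed

lemma set_integral_power2_mult_le:
  fixes h p f :: "'a \<Rightarrow> real"
  assumes f_nonneg: "\<And>x. x \<in> A \<Longrightarrow> 0 \<le> f x" and f: "set_integrable M A f"
    and h: "h \<in> borel_measurable M" and p: "p \<in> borel_measurable M"
    and p_le: "\<And>x. \<bar>p x\<bar> \<le> B" and h_le: "\<And>x. \<bar>h x\<bar> \<le> \<bar>p x\<bar> + \<delta>"
  shows "set_integrable M A (\<lambda>x. (h x)\<^sup>2 * f x)"
    and "(LINT x:A|M. (h x)\<^sup>2 * f x) \<le> 2 * (LINT x:A|M. (p x)\<^sup>2 * f x) + 2 * \<delta>\<^sup>2 * (LINT x:A|M. f x)"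
proof -
  have p2_le: "\<bar>(p x)\<^sup>2\<bar> \<le> B\<^sup>2" and h2_le: "\<bar>(h x)\<^sup>2\<bar> \<le> (B + \<delta>)\<^sup>2" for x
    using p_le[of x] order.trans[OF h_le add_right_mono[OF p_le]]
    by (metis abs_ge_zero abs_power2 power2_abs power_mono)+
  have ip: "set_integrable M A (\<lambda>x. (p x)\<^sup>2 * f x)"
    by (rule set_integrable_bounded_mult[OF f borel_measurable_power[OF p] p2_le])
  have ih: "set_integrable M A (\<lambda>x. (h x)\<^sup>2 * f x)"
    by (rule set_integrable_bounded_mult[OF f borel_measurable_power[OF h] h2_le])
  thus "set_integrable M A (\<lambda>x. (h x)\<^sup>2 * f x)" by blast
  have h2_le_sum: "(h x)\<^sup>2 \<le> 2 * (p x)\<^sup>2 + 2 * \<delta>\<^sup>2" for x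
  proof -
    have "(h x)\<^sup>2 \<le> (\<bar>p x\<bar> + \<delta>)\<^sup>2" using h_le[of x] by (metis abs_ge_zero power2_abs power_mono)
    moreover have "0 \<le> (\<bar>p x\<bar> - \<delta>)\<^sup>2" by simp
    ultimately show ?thesis unfolding power2_sum power2_diff by simp
  qed
  have i2: "set_integrable M A (\<lambda>x. 2 * ((p x)\<^sup>2 * f x))" using ip by simp
  have i3: "set_integrable M A (\<lambda>x. 2 * \<delta>\<^sup>2 * f x)" using f by simp
  have "(LINT x:A|M. (h x)\<^sup>2 * f x) \<le> (LINT x:A|M. 2 * ((p x)\<^sup>2 * f x) + 2 * \<delta>\<^sup>2 * f x)"
  proof (rule set_integral_mono[OF ih set_integral_add(1)[OF i2 i3]])
    fix x assume "x \<in> A"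
    hence "(h x)\<^sup>2 * f x \<le> (2 * (p x)\<^sup>2 + 2 * \<delta>\<^sup>2) * f x"
      using f_nonneg by (intro mult_right_mono h2_le_sum) auto
    thus "(h x)\<^sup>2 * f x \<le> 2 * ((p x)\<^sup>2 * f x) + 2 * \<delta>\<^sup>2 * f x" by (simp add: algebra_simps)
  qed
  also have "\<dots> = 2 * (LINT x:A|M. (p x)\<^sup>2 * f x) + 2 * \<delta>\<^sup>2 * (LINT x:A|M. f x)"
    using set_integral_add(2)[OF i2 i3] by simp
  finally show "(LINT x:A|M. (h x)\<^sup>2 * f x) \<le> \<dots>" .
qed

lemma exists_poly_weighted_norm_le:
  fixes f :: "real \<Rightarrow> real"
  assumes f_nonneg: "\<And>x. x\<in>Lam \<Longrightarrow> 0 \<le> f x" and f: "set_integrable lebesgue Lam f"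
    and n: "1 \<le> n" and \<delta>: "0 < \<delta>" and s: "sigma2 f n < s"
  obtains Q where "poly Q 0 = 1" "degree Q \<le> n" "\<And>z. cmod z = 1 \<Longrightarrow> poly Q z \<noteq> 0"
    "set_integrable lebesgue Lam (\<lambda>t. (cmod (poly Q (cis (-t))))\<^sup>2 * f t)"
    "(LINT t:Lam|lebesgue. (cmod (poly Q (cis (-t))))\<^sup>2 * f t)
       \<le> 2 * s + 2 * \<delta>\<^sup>2 * (LINT t:Lam|lebesgue. f t)"
proof -
  define p where "p c t = cmod (1 - (\<Sum>k=1..n. c k * cis (- real k * t)))" for c t
  have "Inf (range (\<lambda>c. LINT t:Lam|lebesgue. (p c t)\<^sup>2 * f t)) < s"
    using s by (simp add: sigma2_def p_def)
  then obtain c where c: "(LINT t:Lam|lebesgue. (p c t)\<^sup>2 * f t) < s"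
    using cInf_lessD[of "range (\<lambda>c. LINT t:Lam|lebesgue. (p c t)\<^sup>2 * f t)" s] by blast
  obtain Q where Q: "poly Q 0 = 1" "degree Q \<le> n" "\<And>z. cmod z = 1 \<Longrightarrow> poly Q z \<noteq> 0"
    and Qc: "\<And>t. cmod (poly Q (cis (-t)) - (1 - (\<Sum>k=1..n. c k * cis (- real k * t)))) \<le> \<delta>"
    using trig_poly_approx_no_circle_root[OF n \<delta>, of c] by blast
  define h where "h t = cmod (poly Q (cis (-t)))" for t
  have "\<bar>p c t\<bar> \<le> 1 + (\<Sum>k=1..n. cmod (c k))" for t
  proof -
    have "cmod (\<Sum>k=1..n. c k * cis (- real k * t)) \<le> (\<Sum>k=1..n. cmod (c k))"
      by (rule order.trans[OF norm_sum]) (simp add: norm_mult)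
    thus ?thesis using norm_triangle_ineq4[of 1 "\<Sum>k=1..n. c k * cis (- real k * t)"] by (simp add: p_def)
  qed
  moreover have "\<bar>h t\<bar> \<le> \<bar>p c t\<bar> + \<delta>" for t
    using norm_triangle_sub[of "poly Q (cis (-t))" "1 - (\<Sum>k=1..n. c k * cis (- real k * t))"] Qc[of t]
    unfolding h_def p_def abs_norm_cancel by linarith
  moreover have "h \<in> borel_measurable lebesgue" "p c \<in> borel_measurable lebesgue"
    unfolding p_def h_def by (intro continuous_imp_borel_measurable_lebesgue continuous_intros)+
  ultimately have "set_integrable lebesgue Lam (\<lambda>t. (h t)\<^sup>2 * f t)"
    and "(LINT t:Lam|lebesgue. (h t)\<^sup>2 * f t)
      \<le> 2 * (LINT t:Lam|lebesgue. (p c t)\<^sup>2 * f t) + 2 * \<delta>\<^sup>2 * (LINT t:Lam|lebesgue. f t)"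
    using set_integral_power2_mult_le[OF f_nonneg f] by blast+
  with c show ?thesis using that[OF Q] unfolding h_def by linarith
qed

lemma measure_level_set_le:
  fixes f :: "real \<Rightarrow> real"
  assumes f_nonneg: "\<And>x. x\<in>Lam \<Longrightarrow> 0 \<le> f x" and f: "set_integrable lebesgue Lam f"
    and n: "1 \<le> n" and e: "0 < e" and \<delta>: "0 < \<delta>" and b: "0 < b" "b < 1"
    and s: "sigma2 f n < s"
  shows "measure lebesgue {x\<in>Lam. e \<le> f x} \<le> 2*pi*ln 2/(ln 2 - ln b) +
     (2 * s + 2 * \<delta>\<^sup>2 * (LINT x:Lam|lebesgue. f x)) / (e * (b^n)\<^sup>2)"
proof -
  define K where "K = 2 * s + 2 * \<delta>\<^sup>2 * (LINT x:Lam|lebesgue. f x)"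
  obtain Q where Q: "poly Q 0 = 1" "degree Q \<le> n" "\<And>z. cmod z = 1 \<Longrightarrow> poly Q z \<noteq> 0"
    and ih: "set_integrable lebesgue Lam (\<lambda>t. (cmod (poly Q (cis (-t))))\<^sup>2 * f t)"
    and hint: "(LINT t:Lam|lebesgue. (cmod (poly Q (cis (-t))))\<^sup>2 * f t) \<le> K"
    using exists_poly_weighted_norm_le[OF f_nonneg f n \<delta> s] unfolding K_def by blast
  define h where "h t = (cmod (poly Q (cis (-t))))\<^sup>2 * f t" for t
  define c where "c = e * (b^n)\<^sup>2"
  define A where "A = {x\<in>Lam. e \<le> f x}"
  define G where "G = {x\<in>Lam. c \<le> h x}"
  define E where "E = {t\<in>Lam. cmod (poly Q (cis (-t))) < b^n}"
  have c: "0 < c" using e b by (simp add: c_def)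
  have Lam: "Lam \<in> sets lebesgue" by (simp add: Lam_def)
  have "measure lebesgue G \<le> (LINT t:Lam|lebesgue. h t) / c"
    unfolding G_def
    by (rule integral_Markov_inequality'_measure[OF ih[folded h_def] Lam _ c])
      (auto simp: h_def f_nonneg)
  also have "\<dots> \<le> K / c" using hint c by (simp add: h_def divide_right_mono)
  finally have G_le: "measure lebesgue G \<le> K / c" .
  have E: "E \<in> lmeasurable" and E_le: "measure lebesgue E \<le> 2*pi*ln 2/(ln 2 - ln b)"
    using measure_poly_circle_small_le[OF Q(1,2) n Q(3) b] unfolding E_def by auto
  have "A \<subseteq> G \<union> E"
  proof
    fix x assume "x \<in> A"
    hence x: "x \<in> Lam" "e \<le> f x" by (auto simp: A_def)
    show "x \<in> G \<union> E"
    proof (cases "x \<in> E")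
      case False
      hence "(b^n)\<^sup>2 \<le> (cmod (poly Q (cis (-x))))\<^sup>2" using x b by (intro power_mono) (auto simp: E_def)
      hence "c \<le> h x" using x e by (auto simp: c_def h_def mult.commute intro: mult_mono)
      thus ?thesis using x by (simp add: G_def)
    qed simp
  qed
  moreover have "G \<in> sets lebesgue" "A \<in> sets lebesgue"
    using set_integrable_preimage_sets[OF ih[folded h_def] Lam, of "{c..}"]
      set_integrable_preimage_sets[OF f Lam, of "{e..}"] by (simp_all add: G_def A_def)
  moreover have "G \<union> E \<in> lmeasurable"
    using fmeasurableD[OF E] \<open>G \<in> sets lebesgue\<close>
    by (intro lmeasurable_subset_Lam sets.Un) (auto simp: G_def E_def)
  ultimately have "measure lebesgue A \<le> measure lebesgue G + measure lebesgue E"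
    using measure_mono_fmeasurable measure_Un_le[of G lebesgue E] E
    by (metis (no_types, lifting) fmeasurableD order.trans)
  thus ?thesis using G_le E_le unfolding A_def K_def c_def by linarith
qed

lemma measure_level_set_le_of_sigma_bigo:
  fixes f :: "real \<Rightarrow> real"
  assumes f_nonneg: "\<And>x. x\<in>Lam \<Longrightarrow> 0 \<le> f x" and f: "set_integrable lebesgue Lam f"
    and q: "0 < q" "q < b" and b: "b < 1" and sigma: "(\<lambda>n. sigma f n) \<in> O(\<lambda>n. q ^ n)"
    and e: "0 < e"
  shows "measure lebesgue {x\<in>Lam. e \<le> f x} \<le> 2*pi*ln 2/(ln 2 - ln b)"
proof -
  obtain C where "eventually (\<lambda>n. norm (sigma f n) \<le> C * norm (q ^ n)) at_top"
    using sigma by (elim landau_o.bigE)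
  then obtain N where N: "\<And>n. n \<ge> N \<Longrightarrow> \<bar>sigma f n\<bar> \<le> C * q ^ n"
    using q by (auto simp: eventually_at_top_linorder power_abs)
  define \<mu> where "\<mu> = 2*pi*ln 2/(ln 2 - ln b)"
  define K where "K = (2*C\<^sup>2 + 2 + 2 * (LINT x:Lam|lebesgue. f x)) / e"
  define X where "X n = \<mu> + K * ((q/b)^n)\<^sup>2" for n
  have bound: "measure lebesgue {x\<in>Lam. e \<le> f x} \<le> X n" if "n \<ge> max N 1" for n
  proof -
    have "sigma2 f n \<le> (sigma f n)\<^sup>2" \<comment> \<open>\<open>sqrt\<close> is odd, so \<open>(sqrt x)\<^sup>2 = |x|\<close>\<close>
      by (cases "0 \<le> sigma2 f n") (auto simp: sigma_def real_sqrt_minus[symmetric] power2_eq_square)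
    also have "\<dots> \<le> (C*q^n)\<^sup>2" using N that by (metis abs_ge_zero max.boundedE power2_abs power_mono)
    also have "\<dots> < (C*q^n)\<^sup>2 + (q^n)\<^sup>2" using q by simp
    finally have "measure lebesgue {x\<in>Lam. e \<le> f x}
        \<le> \<mu> + (2 * ((C*q^n)\<^sup>2 + (q^n)\<^sup>2) + 2 * (q^n)\<^sup>2 * (LINT x:Lam|lebesgue. f x)) / (e * (b^n)\<^sup>2)"
      unfolding \<mu>_def using that q b e by (intro measure_level_set_le[OF f_nonneg f]) auto
    also have "\<dots> = X n"
      using q e by (simp add: X_def K_def power_mult_distrib power_divide field_simps)
    finally show ?thesis .
  qed
  have "X \<longlonglongrightarrow> \<mu> + K * 0\<^sup>2"
    unfolding X_def using q by (intro tendsto_intros LIMSEQ_realpow_zero) auto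
  hence "X \<longlonglongrightarrow> \<mu>" by simp
  thus ?thesis unfolding \<mu>_def[symmetric] by (rule LIMSEQ_le_const) (use bound in blast)
qed

lemma measure_positive_set_le:
  fixes f :: "'a \<Rightarrow> real"
  assumes A: "A \<in> sets M" "emeasure M A < \<infinity>" and f: "set_borel_measurable M A f"
    and le: "\<And>e. 0 < e \<Longrightarrow> measure M {x\<in>A. e \<le> f x} \<le> c"
  shows "measure M {x\<in>A. 0 < f x} \<le> c"
proof -
  define L where "L m = {x\<in>A. 1 / (real m + 1) \<le> f x}" for m :: nat
  have L_sets: "L m \<in> sets M" for m
    using set_borel_measurable_sets[OF f _ A(1), of "{1/(real m + 1)..}"]
    by (simp add: L_def Int_def conj_commute)
  have "incseq L"
  proof (rule incseq_SucI)
    fix m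
    have "1 / (real (Suc m) + 1) \<le> 1 / (real m + 1)" by (intro divide_left_mono) auto
    thus "L m \<subseteq> L (Suc m)" by (auto simp: L_def)
  qed
  moreover have "(\<Union>m. L m) = {x\<in>A. 0 < f x}"
  proof (intro equalityI subsetI)
    fix x assume "x \<in> {x\<in>A. 0 < f x}"
    then obtain m where "x \<in> A" "inverse (real (Suc m)) < f x"
      using reals_Archimedean by blast
    hence "x \<in> L m" by (simp add: L_def inverse_eq_divide add.commute)
    thus "x \<in> (\<Union>m. L m)" by blast
  next
    fix x assume "x \<in> (\<Union>m. L m)"
    then obtain m where "x \<in> A" and m: "1 / (real m + 1) \<le> f x" by (auto simp: L_def)
    have "0 < 1 / (real m + 1)" by simp
    with m have "0 < f x" by linarith
    with \<open>x \<in> A\<close> show "x \<in> {x\<in>A. 0 < f x}" by simp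
  qed
  moreover have "emeasure M {x\<in>A. 0 < f x} < \<infinity>"
    using A emeasure_mono[of "{x\<in>A. 0 < f x}" A M] by (auto simp: order.strict_trans1)
  ultimately have "(\<lambda>m. measure M (L m)) \<longlonglongrightarrow> measure M {x\<in>A. 0 < f x}"
    using Lim_measure_incseq[of L M] L_sets by (simp add: image_subset_iff less_top)
  thus ?thesis by (rule LIMSEQ_le_const2) (auto simp: L_def intro!: le)
qed

theorem mainTheorem3:
  fixes f :: "real \<Rightarrow> real"
  assumes "spectral_density f"
    and "\<exists>q. 0 < q \<and> q < 1 \<and> (\<lambda>n. sigma f n) \<in> O(\<lambda>n. q ^ n)"
  shows "{x\<in>Lam. f x = 0} \<in> sets lebesgue \<and> emeasure lebesgue {x\<in>Lam. f x = 0} > 0"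
proof -
  from assms(1) have f_nonneg: "\<And>x. x\<in>Lam \<Longrightarrow> 0 \<le> f x" and f: "set_integrable lebesgue Lam f"
    unfolding spectral_density_def by auto
  from assms(2) obtain q where q: "0 < q" "q < 1" and sigma: "(\<lambda>n. sigma f n) \<in> O(\<lambda>n. q ^ n)"
    by blast
  define b where "b = (1 + q) / 2"
  have b: "q < b" "b < 1" using q by (auto simp: b_def)
  define \<mu> where "\<mu> = 2*pi*ln 2/(ln 2 - ln b)"
  have Lam: "Lam \<in> sets lebesgue" "emeasure lebesgue Lam < \<infinity>" by (auto simp: Lam_def)
  have Z: "{x\<in>Lam. f x = 0} \<in> sets lebesgue" and P: "{x\<in>Lam. 0 < f x} \<in> sets lebesgue"
    using set_integrable_preimage_sets[OF f Lam(1), of "{0}"]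
      set_integrable_preimage_sets[OF f Lam(1), of "{0<..}"] by auto
  have "measure lebesgue {x\<in>Lam. 0 < f x} \<le> \<mu>"
    using measure_positive_set_le[OF Lam] measure_level_set_le_of_sigma_bigo[OF f_nonneg f q(1) b sigma]
      f by (auto simp: \<mu>_def set_borel_measurable_def set_integrable_def)
  moreover have "\<mu> < 2*pi"
    using q b by (simp add: \<mu>_def pos_divide_less_eq ln_less_zero add_pos_pos)
  moreover have "Lam = {x\<in>Lam. f x = 0} \<union> {x\<in>Lam. 0 < f x}" using f_nonneg by force
  hence "measure lebesgue Lam \<le> measure lebesgue {x\<in>Lam. f x = 0} + measure lebesgue {x\<in>Lam. 0 < f x}"
    using measure_Un_le[OF Z P] by simp
  moreover have "measure lebesgue Lam = 2*pi" by (simp add: Lam_def)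
  ultimately have "0 < measure lebesgue {x\<in>Lam. f x = 0}" by linarith
  thus ?thesis using Z by (simp add: measure_def enn2real_positive_iff)
qed

end
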